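(* Let $g$ be a continuous $g$-function on $X=A^{\mathbb{N}}$ and let $\mu$ be a compatible $g$-measure. For each $\ell\in\mathbb{N}$ let $\mu_\ell$ be the canonical $\ell$-step Markov approximation to $\mu$. Then $\mu_\ell\to\mu$ as $\ell\to\infty$ in the projective distance $\rho$; moreover \[ \rho(\mu_\ell,\mu)\le \operatorname{var}_\ell(\log\circ g)\quad\text{for all }\ell\in\mathbb{N}. \]
   Context: $A$ is a finite alphabet, $X=A^{\mathbb{N}}$ with product topology, $T$ the left shift, $\pmb{x}_n^m=x_nx_{n+1}\cdots x_m$, and $[\pmb{a}]=\{\pmb{x}: \pmb{x}_1^n=\pmb{a}\}$ for $\pmb{a}\in A^n$. $\mathcal{M}^+(X)$ is the set of Borel probability measures giving positive mass to every cylinder. Projective distance: $\rho(\mu,\nu)=\sup_{n}\max_{\pmb{a}\in A^n}\frac1n|\log(\mu[\pmb{a}]/\nu[\pmb{a}])|$. A $g$-function is a Borel function $g:X\to(0,1)$ with $\sum_{a\in A}g(a x_2x_3\cdots)=1$ for all $\pmb{x}\in X$. A compatible $g$-measure is a $T$-invariant $\mu\in\mathcal{M}^+(X)$ such that $\lim_{n\to\infty}\mu[a_1\pmb{a}_2^n]/\mu[\pmb{a}_2^n]=g(\pmb{a})$ for all $\pmb{a}\in X$. The canonical $\ell$-step Markov approximation $\mu_\ell$ is the measure with $\mu_\ell[\pmb{a}_1^n]=\mu[\pmb{a}_1^n]$ for $n\le \ell$ and $\mu_\ell[\pmb{a}_1^n]=\mu[\pmb{a}_1^\ell]\prod_{j=1}^{n-\ell}\mu[\pmb{a}_j^{j+\ell}]/\mu[\pmb{a}_j^{j+\ell-1}]$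 for $n\ge\ell$. For $\phi:X\to\mathbb{R}$, $\operatorname{var}_\ell\phi=\max_{\pmb{a}\in A^\ell}\{\sup_{\pmb{x}\in[\pmb{a}]}\phi(\pmb{x})-\inf_{\pmb{x}\in[\pmb{a}]}\phi(\pmb{x})\}$. *)

theory Defs
  imports "HOL-Probability.Probability"
begin

text \<open>The alphabet A is a finite type 'a; X = A^N is the type nat => 'a
  (coordinate i of the sequence is x i, the paper's x_{i+1}).\<close>

definition topX :: "(nat \<Rightarrow> 'a) topology" where
  "topX = product_topology (\<lambda>_. discrete_topology (UNIV :: 'a set)) UNIV"

definition borelX :: "(nat \<Rightarrow> 'a) measure" where
  "borelX = sigma UNIV {S. openin topX S}"

definition shiftX :: "(nat \<Rightarrow> 'a) \<Rightarrow> (nat \<Rightarrow> 'a)" where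
  "shiftX x = (\<lambda>i. x (Suc i))"

definition sconsX :: "'a \<Rightarrow> (nat \<Rightarrow> 'a) \<Rightarrow> (nat \<Rightarrow> 'a)" where
  "sconsX a x = (\<lambda>i. if i = 0 then a else x (i - 1))"

definition cyl :: "'a list \<Rightarrow> (nat \<Rightarrow> 'a) set" where
  "cyl w = {x. \<forall>i<length w. x i = w ! i}"

text \<open>The initial word x_{m+1} ... x_n (0-based: positions m..n-1).\<close>
definition word :: "(nat \<Rightarrow> 'a) \<Rightarrow> nat \<Rightarrow> nat \<Rightarrow> 'a list" where
  "word x m n = map x [m..<n]"

definition Mplus :: "(nat \<Rightarrow> 'a) measure set" where
  "Mplus = {\<mu>. prob_space \<mu> \<and> sets \<mu> = sets borelX \<and> (\<forall>w. measure \<mu> (cyl w) > 0)}"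

definition shift_invariant :: "(nat \<Rightarrow> 'a) measure \<Rightarrow> bool" where
  "shift_invariant \<mu> \<longleftrightarrow> (\<forall>S \<in> sets \<mu>. emeasure \<mu> (shiftX -` S) = emeasure \<mu> S)"

text \<open>Projective distance (possibly infinite, hence ereal).\<close>
definition proj_dist :: "(nat \<Rightarrow> 'a) measure \<Rightarrow> (nat \<Rightarrow> 'a) measure \<Rightarrow> ereal" where
  "proj_dist \<mu> \<nu> = (SUP n \<in> {1..}. ereal (Max {\<bar>ln (measure \<mu> (cyl w) / measure \<nu> (cyl w))\<bar> / real n
                                                | w :: 'a list. length w = n}))"

definition g_function :: "((nat \<Rightarrow> 'a::finite) \<Rightarrow> real) \<Rightarrow> bool" where
  "g_function g \<longleftrightarrow> g \<in> borel_measurable borelX \<and> (\<forall>x. 0 < g x \<and> g x < 1)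
     \<and> (\<forall>x. (\<Sum>a\<in>UNIV. g (sconsX a (shiftX x))) = 1)"

definition compatible_g_measure :: "((nat \<Rightarrow> 'a::finite) \<Rightarrow> real) \<Rightarrow> (nat \<Rightarrow> 'a) measure \<Rightarrow> bool" where
  "compatible_g_measure g \<mu> \<longleftrightarrow> shift_invariant \<mu> \<and> \<mu> \<in> Mplus \<and>
     (\<forall>x. (\<lambda>n. measure \<mu> (cyl (word x 0 n)) / measure \<mu> (cyl (word x 1 n)))
            \<longlonglongrightarrow> g x)"

definition markov_cyl :: "(nat \<Rightarrow> 'a) measure \<Rightarrow> nat \<Rightarrow> 'a list \<Rightarrow> real" where
  "markov_cyl \<mu> l w =
     (if length w \<le> l then measure \<mu> (cyl w)
      else measure \<mu> (cyl (take l w)) *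
        (\<Prod>j<length w - l. measure \<mu> (cyl (take (l + 1) (drop j w)))
                             / measure \<mu> (cyl (take l (drop j w)))))"

definition is_markov_approx :: "(nat \<Rightarrow> 'a) measure \<Rightarrow> nat \<Rightarrow> (nat \<Rightarrow> 'a) measure \<Rightarrow> bool" where
  "is_markov_approx \<mu> l \<nu> \<longleftrightarrow> prob_space \<nu> \<and> sets \<nu> = sets borelX \<and>
     (\<forall>w. measure \<nu> (cyl w) = markov_cyl \<mu> l w)"

definition var :: "nat \<Rightarrow> ((nat \<Rightarrow> 'a::finite) \<Rightarrow> real) \<Rightarrow> real" where
  "var l \<phi> = Max {(SUP x \<in> cyl w. \<phi> x) - (INF x \<in> cyl w. \<phi> x) | w :: 'a list. length w = l}"

end

theory Submission
  imports Defs
begin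

text \<open>Write r(w) = \<mu>[w] / \<mu>[tl w]. Since \<mu>[u] is the sum of \<mu>[u b] over all letters b,
  the ratio r(u) is a weighted average of the ratios r(u b); hence u can be extended letter by
  letter without decreasing (or without increasing) r, and along the resulting point x in [u]
  the ratios tend to g(x) by compatibility. So r(u) lies between the infimum and the supremum
  of g on [u]. Both \<mu>[w] and \<mu>_l[w] are telescoping products of such ratios, taken of the
  full suffixes of w for \<mu> and of their first l+1 letters for \<mu>_l; corresponding factors
  share a cylinder of length l, so each contributes at most var_l(log g) to
  |log (\<mu>_l[w] / \<mu>[w])|. Uniform continuity of log g on the compact space X makes
  var_l(log g) tend to 0.\<close>

lemma topspace_topX [simp]: "topspace topX = UNIV"
  by (simp add: topX_def topspace_product_topology PiE_UNIV_domain)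

lemma compact_space_topX: "compact_space (topX :: (nat \<Rightarrow> 'a::finite) topology)"
  unfolding topX_def by (simp add: compact_space_product_topology compact_space_discrete_topology)

lemma openin_cyl: "openin topX (cyl w)"
  unfolding topX_def openin_product_topology_alt
proof
  fix x assume x: "x \<in> cyl w"
  define U where "U i = (if i < length w then {w!i} else UNIV)" for i
  have "{i \<in> UNIV. U i \<noteq> topspace (discrete_topology UNIV)} \<subseteq> {..<length w}"
    by (auto simp: U_def)
  hence "finite {i \<in> UNIV. U i \<noteq> topspace (discrete_topology UNIV)}"
    using finite_subset by blast
  moreover have "Pi\<^sub>E UNIV U = cyl w"
    by (auto simp: U_def cyl_def PiE_UNIV_domain Pi_iff) (metis singletonD)
  ultimately show "\<exists>U. finite {i \<in> UNIV. U i \<noteq> topspace (discrete_topology UNIV)} \<and>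
      (\<forall>i\<in>UNIV. openin (discrete_topology UNIV) (U i)) \<and> x \<in> Pi\<^sub>E UNIV U \<and> Pi\<^sub>E UNIV U \<subseteq> cyl w"
    using x by auto
qed

lemma mem_cyl_word: "x \<in> cyl (word x 0 n)"
  by (simp add: cyl_def word_def)

lemma cyl_in_sets_borelX: "cyl w \<in> sets borelX"
  unfolding borelX_def using openin_cyl[of w] by (simp add: sets_measure_of)

lemma openin_topX_contains_cyl_word:
  assumes "openin topX S" "x \<in> S"
  obtains n where "cyl (word x 0 n) \<subseteq> S"
proof -
  obtain U where U: "finite {i \<in> UNIV. U i \<noteq> topspace (discrete_topology UNIV)}"
    "x \<in> Pi\<^sub>E UNIV U" "Pi\<^sub>E UNIV U \<subseteq> S"
    using assms unfolding topX_def openin_product_topology_alt by blast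
  define n where "n = Suc (Max {i. U i \<noteq> UNIV})"
  have "i < n" if "U i \<noteq> UNIV" for i
    using U(1) that by (simp add: n_def le_imp_less_Suc)
  hence "cyl (word x 0 n) \<subseteq> Pi\<^sub>E UNIV U"
    using U(2) by (fastforce simp: PiE_UNIV_domain cyl_def word_def)
  thus thesis using U(3) by (intro that) (rule subset_trans)
qed

lemma continuous_map_topX_uniformly:
  fixes f :: "(nat \<Rightarrow> 'a::finite) \<Rightarrow> real"
  assumes f: "continuous_map topX euclideanreal f" and "e > 0"
  obtains L where "\<And>y z. (\<forall>i<L. y i = z i) \<Longrightarrow> \<bar>f y - f z\<bar> < e"
proof -
  have "\<exists>n. cyl (word x 0 n) \<subseteq> {y. \<bar>f y - f x\<bar> < e/2}" for x
  proof -
    have "openin topX {y \<in> topspace topX. f y \<in> ball (f x) (e/2)}"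
      by (rule openin_continuous_map_preimage[OF f]) simp
    moreover have "{y \<in> topspace topX. f y \<in> ball (f x) (e/2)} = {y. \<bar>f y - f x\<bar> < e/2}"
      by (auto simp: dist_real_def abs_minus_commute)
    ultimately have "openin topX {y. \<bar>f y - f x\<bar> < e/2}" by simp
    moreover have "x \<in> {y. \<bar>f y - f x\<bar> < e/2}" using \<open>e > 0\<close> by simp
    ultimately obtain n where "cyl (word x 0 n) \<subseteq> {y. \<bar>f y - f x\<bar> < e/2}"
      by (rule openin_topX_contains_cyl_word)
    thus ?thesis ..
  qed
  then obtain n where n: "\<And>x. cyl (word x 0 (n x)) \<subseteq> {y. \<bar>f y - f x\<bar> < e/2}"
    by metis
  have "topspace topX \<subseteq> \<Union>(range (\<lambda>x. cyl (word x 0 (n x))))"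
    using mem_cyl_word by blast
  moreover have "\<forall>B \<in> range (\<lambda>x. cyl (word x 0 (n x))). openin topX B"
    using openin_cyl by blast
  ultimately have "\<exists>F. finite F \<and> F \<subseteq> range (\<lambda>x. cyl (word x 0 (n x))) \<and> topspace topX \<subseteq> \<Union>F"
    by (intro compact_space_alt[THEN iffD1, OF compact_space_topX, rule_format] conjI)
  then obtain F where F: "finite F" "F \<subseteq> range (\<lambda>x. cyl (word x 0 (n x)))" "topspace topX \<subseteq> \<Union>F"
    by (elim exE conjE)
  obtain K where K: "finite K" "F = (\<lambda>x. cyl (word x 0 (n x))) ` K"
    using finite_subset_image[OF F(1,2)] by (elim exE conjE)
  show thesis
  proof (rule that)
    fix y z :: "nat \<Rightarrow> 'a" assume yz: "\<forall>i<(\<Sum>x\<in>K. n x). y i = z i"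
    obtain x where x: "x \<in> K" "y \<in> cyl (word x 0 (n x))" using F(3) K(2) by auto
    have "n x \<le> (\<Sum>x\<in>K. n x)" using K(1) x(1) by (simp add: member_le_sum)
    hence "z \<in> cyl (word x 0 (n x))" using x(2) yz by (auto simp: cyl_def word_def)
    hence "\<bar>f z - f x\<bar> < e/2" "\<bar>f y - f x\<bar> < e/2" using n[of x] x(2) by blast+
    thus "\<bar>f y - f z\<bar> < e" by linarith
  qed
qed

lemma bounded_range_continuous_map_topX:
  fixes f :: "(nat \<Rightarrow> 'a::finite) \<Rightarrow> real"
  assumes "continuous_map topX euclideanreal f"
  shows "bounded (range f)"
proof -
  have "compactin euclideanreal (f ` topspace topX)"
    using image_compactin compact_space_topX assms by (metis compact_space_def)
  thus ?thesis by (simp add: compactin_euclidean_iff compact_imp_bounded)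
qed

lemma continuous_map_ln_comp:
  assumes f: "continuous_map X euclideanreal f" and pos: "\<And>x. x \<in> topspace X \<Longrightarrow> 0 < f x"
  shows "continuous_map X euclideanreal (ln \<circ> f)"
proof (rule continuous_map_compose)
  show "continuous_map X (top_of_set {0<..}) f"
    using f pos by (auto intro: continuous_map_into_subtopology)
  have "continuous_on {0<..} (ln :: real \<Rightarrow> real)"
    by (intro continuous_on_ln continuous_on_id) auto
  thus "continuous_map (top_of_set {0<..}) euclideanreal ln"
    by simp
qed

lemma cyl_take_subset: "cyl u \<subseteq> cyl (take k u)"
  by (auto simp: cyl_def)

lemma tl_word: "tl (word x 0 n) = word x 1 n"
  by (cases n) (auto simp: word_def upt_conv_Cons)

lemma finite_image_words_length: "finite {f w | w :: 'a::finite list. length w = n}"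
proof -
  have "finite {w :: 'a list. length w = n}"
    using finite_lists_length_eq[of "UNIV :: 'a set" n] by simp
  thus ?thesis by (simp add: setcompr_eq_image)
qed

lemma image_words_length_nonempty: "{f w | w :: 'a list. length w = n} \<noteq> {}"
proof -
  have "f (replicate n undefined) \<in> {f w | w :: 'a list. length w = n}"
    by (intro CollectI exI[of _ "replicate n undefined"]) simp
  thus ?thesis by auto
qed

lemma Mplus_measure_cyl_pos: "\<mu> \<in> Mplus \<Longrightarrow> 0 < measure \<mu> (cyl w)"
  by (simp add: Mplus_def)

lemma Mplus_measure_cyl_eq_sum_snoc:
  fixes \<mu> :: "(nat \<Rightarrow> 'a::finite) measure"
  assumes "\<mu> \<in> Mplus"
  shows "measure \<mu> (cyl u) = (\<Sum>b\<in>UNIV. measure \<mu> (cyl (u @ [b])))"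
proof -
  have "cyl u = (\<Union>b. cyl (u @ [b]))"
    by (auto simp: cyl_def nth_append less_Suc_eq)
  moreover have "disjoint_family (\<lambda>b. cyl (u @ [b]))"
    by (auto simp: disjoint_family_on_def cyl_def)
  moreover have "finite_measure \<mu>" "\<And>b. cyl (u @ [b]) \<in> sets \<mu>"
    using assms cyl_in_sets_borelX by (auto simp: Mplus_def prob_space_def)
  ultimately show ?thesis
    by (simp add: finite_measure.finite_measure_finite_Union[of \<mu> UNIV] image_subset_iff)
qed

lemma exists_ratio_le_sum_ratio:
  fixes a b :: "'i \<Rightarrow> real"
  assumes "finite I" "I \<noteq> {}" "\<And>i. i \<in> I \<Longrightarrow> 0 < b i"
  shows "\<exists>i\<in>I. a i / b i \<le> sum a I / sum b I"
proof (rule ccontr)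
  define c where "c = sum a I / sum b I"
  have "0 < sum b I" using assms by (simp add: sum_pos)
  assume "\<not> ?thesis"
  hence ratio_gt: "c < a i / b i" if "i \<in> I" for i
    using that by (auto simp: c_def not_le)
  have "c * b i < a i" if "i \<in> I" for i
    using ratio_gt[OF that] assms(3)[OF that] by (simp add: pos_less_divide_eq)
  hence "(\<Sum>i\<in>I. c * b i) < sum a I"
    using assms(1,2) by (intro sum_strict_mono) auto
  moreover have "(\<Sum>i\<in>I. c * b i) = sum a I"
    using \<open>0 < sum b I\<close> by (simp add: c_def flip: sum_distrib_left sum_divide_distrib)
  ultimately show False by simp
qed

lemma exists_ratio_ge_sum_ratio:
  fixes a b :: "'i \<Rightarrow> real"
  assumes "finite I" "I \<noteq> {}" "\<And>i. i \<in> I \<Longrightarrow> 0 < b i"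
  shows "\<exists>i\<in>I. sum a I / sum b I \<le> a i / b i"
  using exists_ratio_le_sum_ratio[of I b "\<lambda>i. - a i", OF assms] by (simp add: sum_negf)

definition cyl_ratio :: "(nat \<Rightarrow> 'a) measure \<Rightarrow> 'a list \<Rightarrow> real" where
  "cyl_ratio \<mu> w = measure \<mu> (cyl w) / measure \<mu> (cyl (tl w))"

lemma cyl_ratio_snoc_bounds:
  fixes \<mu> :: "(nat \<Rightarrow> 'a::finite) measure"
  assumes "\<mu> \<in> Mplus" "u \<noteq> []"
  shows "\<exists>b. cyl_ratio \<mu> u \<le> cyl_ratio \<mu> (u @ [b])"
    and "\<exists>b. cyl_ratio \<mu> (u @ [b]) \<le> cyl_ratio \<mu> u"
proof -
  define a where "a b = measure \<mu> (cyl (u @ [b]))" for b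
  define d where "d b = measure \<mu> (cyl (tl u @ [b]))" for b
  have ratio_u: "cyl_ratio \<mu> u = sum a UNIV / sum d UNIV"
    using assms(1) by (simp add: cyl_ratio_def a_def d_def flip: Mplus_measure_cyl_eq_sum_snoc)
  have ratio_snoc: "cyl_ratio \<mu> (u @ [b]) = a b / d b" for b
    using assms(2) by (simp add: cyl_ratio_def a_def d_def)
  have "0 < d b" for b
    by (simp add: d_def Mplus_measure_cyl_pos[OF assms(1)])
  thus "\<exists>b. cyl_ratio \<mu> u \<le> cyl_ratio \<mu> (u @ [b])"
    and "\<exists>b. cyl_ratio \<mu> (u @ [b]) \<le> cyl_ratio \<mu> u"
    unfolding ratio_u ratio_snoc
    using exists_ratio_ge_sum_ratio[of UNIV d a] exists_ratio_le_sum_ratio[of UNIV d a] by auto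
qed

lemma exists_branch:
  assumes "P v" and extend: "\<And>u. P u \<Longrightarrow> \<exists>b. P (u @ [b])"
  shows "\<exists>x\<in>cyl v. \<forall>n\<ge>length v. P (word x 0 n)"
proof -
  define ext where "ext k = ((\<lambda>u. u @ [SOME b. P (u @ [b])]) ^^ k) v" for k
  have ext_Suc: "ext (Suc k) = ext k @ [SOME b. P (ext k @ [b])]" for k
    by (simp add: ext_def)
  have len: "length (ext k) = length v + k" for k
    by (induction k) (simp_all add: ext_def ext_Suc)
  have P_ext: "P (ext k)" for k
  proof (induction k)
    case 0
    show ?case using \<open>P v\<close> by (simp add: ext_def)
  next
    case (Suc k)
    show ?case unfolding ext_Suc using extend[OF Suc] by (rule someI_ex)
  qed
  have prefix: "take (length (ext k)) (ext m) = ext k" if "k \<le> m" for k m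
    using that by (induction m) (auto simp: ext_Suc len le_Suc_eq)
  have nth_ext: "ext m ! i = ext k ! i" if "i < length (ext k)" "k \<le> m" for i k m
    using prefix[OF that(2)] that(1) by (metis nth_take)
  define x where "x i = ext (Suc i) ! i" for i
  have word_x: "word x 0 (length v + k) = ext k" for k
  proof (rule nth_equalityI)
    fix i assume "i < length (word x 0 (length v + k))"
    hence i: "i < length v + k" by (simp add: word_def)
    have "x i = ext (Suc i + k) ! i"
      unfolding x_def by (rule nth_ext[symmetric]) (simp_all add: len)
    also have "\<dots> = ext k ! i"
      by (rule nth_ext) (use i in \<open>simp_all add: len\<close>)
    finally show "word x 0 (length v + k) ! i = ext k ! i"
      using i by (simp add: word_def)
  qed (simp add: word_def len)
  have "x \<in> cyl v"
    using mem_cyl_word[of x "length v"] word_x[of 0] by (simp add: ext_def)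
  moreover have "P (word x 0 n)" if "n \<ge> length v" for n
    using word_x[of "n - length v"] P_ext that by simp
  ultimately show ?thesis by blast
qed

lemma exists_branch_ge:
  fixes r :: "'a list \<Rightarrow> real"
  assumes "u \<noteq> []" and step: "\<And>w. w \<noteq> [] \<Longrightarrow> \<exists>b. r w \<le> r (w @ [b])"
  shows "\<exists>x\<in>cyl u. \<forall>n\<ge>length u. r u \<le> r (word x 0 n)"
proof -
  have "\<exists>b. w @ [b] \<noteq> [] \<and> r u \<le> r (w @ [b])" if hw: "w \<noteq> [] \<and> r u \<le> r w" for w
  proof -
    obtain b where "r w \<le> r (w @ [b])" using step conjunct1[OF hw] by blast
    with hw show ?thesis by (intro exI[of _ b]) auto
  qed
  from exists_branch[OF conjI[OF \<open>u \<noteq> []\<close> order_refl] this] show ?thesis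
    by blast
qed

lemma cyl_ratio_word_tendsto:
  assumes "compatible_g_measure g \<mu>"
  shows "(\<lambda>n. cyl_ratio \<mu> (word x 0 n)) \<longlonglongrightarrow> g x"
  using assms by (simp add: compatible_g_measure_def cyl_ratio_def tl_word)

lemma cyl_ratio_between_g:
  fixes g :: "(nat \<Rightarrow> 'a::finite) \<Rightarrow> real"
  assumes c: "compatible_g_measure g \<mu>" and "u \<noteq> []"
  shows "\<exists>x\<in>cyl u. cyl_ratio \<mu> u \<le> g x"
    and "\<exists>x\<in>cyl u. g x \<le> cyl_ratio \<mu> u"
proof -
  have mu: "\<mu> \<in> Mplus" using c by (simp add: compatible_g_measure_def)
  obtain x where x: "x \<in> cyl u" "\<forall>n\<ge>length u. cyl_ratio \<mu> u \<le> cyl_ratio \<mu> (word x 0 n)"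
    using exists_branch_ge[OF \<open>u \<noteq> []\<close> cyl_ratio_snoc_bounds(1)[OF mu]] by blast
  have "cyl_ratio \<mu> u \<le> g x"
    by (rule LIMSEQ_le_const[OF cyl_ratio_word_tendsto[OF c]]) (use x(2) in auto)
  with x(1) show "\<exists>x\<in>cyl u. cyl_ratio \<mu> u \<le> g x" by blast
  obtain y where y: "y \<in> cyl u" "\<forall>n\<ge>length u. - cyl_ratio \<mu> u \<le> - cyl_ratio \<mu> (word y 0 n)"
    using exists_branch_ge[of u "\<lambda>w. - cyl_ratio \<mu> w"] cyl_ratio_snoc_bounds(2)[OF mu] \<open>u \<noteq> []\<close>
    by auto
  have "g y \<le> cyl_ratio \<mu> u"
    by (rule LIMSEQ_le_const2[OF cyl_ratio_word_tendsto[OF c]]) (use y(2) in auto)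
  with y(1) show "\<exists>x\<in>cyl u. g x \<le> cyl_ratio \<mu> u" by blast
qed

lemma ln_cyl_ratio_diff_le:
  fixes g :: "(nat \<Rightarrow> 'a::finite) \<Rightarrow> real"
  assumes c: "compatible_g_measure g \<mu>" and g_pos: "\<And>x. 0 < g x"
    and "u \<noteq> []" "u' \<noteq> []" "cyl u \<subseteq> C" "cyl u' \<subseteq> C"
    and osc: "\<And>x y. x \<in> C \<Longrightarrow> y \<in> C \<Longrightarrow> ln (g x) - ln (g y) \<le> V"
  shows "\<bar>ln (cyl_ratio \<mu> u) - ln (cyl_ratio \<mu> u')\<bar> \<le> V"
proof -
  have ratio_pos: "0 < cyl_ratio \<mu> v" for v
    using c by (simp add: compatible_g_measure_def cyl_ratio_def Mplus_measure_cyl_pos)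
  obtain x y where "x \<in> C" "cyl_ratio \<mu> u \<le> g x" "y \<in> C" "g y \<le> cyl_ratio \<mu> u"
    using cyl_ratio_between_g[OF c \<open>u \<noteq> []\<close>] \<open>cyl u \<subseteq> C\<close> by blast
  moreover obtain x' y' where "x' \<in> C" "cyl_ratio \<mu> u' \<le> g x'" "y' \<in> C" "g y' \<le> cyl_ratio \<mu> u'"
    using cyl_ratio_between_g[OF c \<open>u' \<noteq> []\<close>] \<open>cyl u' \<subseteq> C\<close> by blast
  ultimately have "ln (cyl_ratio \<mu> u) \<le> ln (g x)" "ln (g y) \<le> ln (cyl_ratio \<mu> u)"
    "ln (cyl_ratio \<mu> u') \<le> ln (g x')" "ln (g y') \<le> ln (cyl_ratio \<mu> u')"
    "ln (g x) - ln (g y') \<le> V" "ln (g x') - ln (g y) \<le> V"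
    using ratio_pos g_pos osc by simp_all
  thus ?thesis by linarith
qed

lemma markov_cyl_Cons:
  assumes mu: "\<mu> \<in> Mplus" and len: "l \<le> length w"
  shows "markov_cyl \<mu> l (a # w) = markov_cyl \<mu> l w * cyl_ratio \<mu> (take (Suc l) (a # w))"
proof -
  let ?M = "\<lambda>w. measure \<mu> (cyl w)"
  define f where "f j = ?M (take (Suc l) (drop j (a # w))) / ?M (take l (drop j (a # w)))" for j
  define P where "P = (\<Prod>j<length w - l. ?M (take (Suc l) (drop j w)) / ?M (take l (drop j w)))"
  have "markov_cyl \<mu> l (a # w) = ?M (take l (a # w)) * (\<Prod>j<Suc (length w - l). f j)"
    using len by (simp add: markov_cyl_def f_def Suc_diff_le del: take_Suc_Cons)
  also have "(\<Prod>j<Suc (length w - l). f j) = f 0 * P"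
    unfolding prod.lessThan_Suc_shift by (simp add: f_def P_def)
  also have "?M (take l (a # w)) * (f 0 * P) = ?M (take (Suc l) (a # w)) * P"
    using Mplus_measure_cyl_pos[OF mu, of "take l (a # w)"] by (simp add: f_def del: take_Suc_Cons)
  also have "\<dots> = ?M (take l w) * P * cyl_ratio \<mu> (take (Suc l) (a # w))"
    using Mplus_measure_cyl_pos[OF mu, of "take l w"] by (simp add: cyl_ratio_def)
  also have "?M (take l w) * P = markov_cyl \<mu> l w"
    using len by (cases "length w = l") (simp_all add: markov_cyl_def P_def)
  finally show ?thesis .
qed

lemma measure_cyl_Cons:
  "\<mu> \<in> Mplus \<Longrightarrow> measure \<mu> (cyl (a # w)) = measure \<mu> (cyl w) * cyl_ratio \<mu> (a # w)"
  using Mplus_measure_cyl_pos[of \<mu> w] by (simp add: cyl_ratio_def)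

lemma ln_markov_cyl_diff_le:
  fixes g :: "(nat \<Rightarrow> 'a::finite) \<Rightarrow> real"
  assumes c: "compatible_g_measure g \<mu>" and g_pos: "\<And>x. 0 < g x"
    and osc: "\<And>v x y. length v = l \<Longrightarrow> x \<in> cyl v \<Longrightarrow> y \<in> cyl v \<Longrightarrow> ln (g x) - ln (g y) \<le> V"
  shows "0 < markov_cyl \<mu> l w \<and>
    \<bar>ln (markov_cyl \<mu> l w) - ln (measure \<mu> (cyl w))\<bar> \<le> real (length w - l) * V"
proof (induction w)
  case Nil
  with c show ?case by (simp add: markov_cyl_def compatible_g_measure_def Mplus_measure_cyl_pos)
next
  case (Cons a w)
  have mu: "\<mu> \<in> Mplus" using c by (simp add: compatible_g_measure_def)
  show ?case
  proof (cases "l \<le> length w")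
    case False
    thus ?thesis using mu by (simp add: markov_cyl_def Mplus_measure_cyl_pos)
  next
    case True
    let ?r = "cyl_ratio \<mu> (take (Suc l) (a # w))" and ?s = "cyl_ratio \<mu> (a # w)"
    have "cyl (take (Suc l) (a # w)) \<subseteq> cyl (take l (a # w))"
      by (metis cyl_take_subset min.absorb1 le_SucI order_refl take_take)
    hence "\<bar>ln ?r - ln ?s\<bar> \<le> V"
      using True cyl_take_subset
      by (intro ln_cyl_ratio_diff_le[OF c g_pos, where C = "cyl (take l (a # w))"] osc) auto
    moreover have "0 < ?r" "0 < ?s" "0 < measure \<mu> (cyl w)" "0 < markov_cyl \<mu> l w"
      using mu Cons.IH by (simp_all add: cyl_ratio_def Mplus_measure_cyl_pos del: take_Suc_Cons)
    ultimately have "0 < markov_cyl \<mu> l (a # w)"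
      and "ln (markov_cyl \<mu> l (a # w)) - ln (measure \<mu> (cyl (a # w)))
        = (ln (markov_cyl \<mu> l w) - ln (measure \<mu> (cyl w))) + (ln ?r - ln ?s)"
      by (simp_all add: markov_cyl_Cons[OF mu True] measure_cyl_Cons[OF mu] ln_mult
          del: take_Suc_Cons)
    moreover have "real (length (a # w) - l) * V = real (length w - l) * V + V"
      using True by (simp add: Suc_diff_le algebra_simps)
    ultimately show ?thesis
      using Cons.IH \<open>\<bar>ln ?r - ln ?s\<bar> \<le> V\<close> by linarith
  qed
qed

lemma diff_le_var:
  fixes \<phi> :: "(nat \<Rightarrow> 'a::finite) \<Rightarrow> real"
  assumes "bounded (range \<phi>)" "length v = l" "x \<in> cyl v" "y \<in> cyl v"
  shows "\<phi> x - \<phi> y \<le> var l \<phi>"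
proof -
  have "bounded (\<phi> ` cyl v)" using assms(1) by (rule bounded_subset) blast
  hence "\<phi> x \<le> (SUP z\<in>cyl v. \<phi> z)" "(INF z\<in>cyl v. \<phi> z) \<le> \<phi> y"
    using assms(3,4) by (simp_all add: cSUP_upper cINF_lower bounded_imp_bdd_above bounded_imp_bdd_below)
  moreover have "(SUP z\<in>cyl v. \<phi> z) - (INF z\<in>cyl v. \<phi> z) \<le> var l \<phi>"
    unfolding var_def by (rule Max_ge[OF finite_image_words_length]) (use assms(2) in blast)
  ultimately show ?thesis by linarith
qed

lemma var_nonneg:
  fixes \<phi> :: "(nat \<Rightarrow> 'a::finite) \<Rightarrow> real"
  assumes "bounded (range \<phi>)"
  shows "0 \<le> var l \<phi>"
proof -
  have "length (word x 0 l) = l" for x :: "nat \<Rightarrow> 'a" by (simp add: word_def)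
  from diff_le_var[OF assms this mem_cyl_word mem_cyl_word] show ?thesis by simp
qed

lemma var_le:
  fixes \<phi> :: "(nat \<Rightarrow> 'a::finite) \<Rightarrow> real"
  assumes close: "\<And>x y. \<forall>i<l. x i = y i \<Longrightarrow> \<bar>\<phi> x - \<phi> y\<bar> \<le> e"
  shows "var l \<phi> \<le> e"
  unfolding var_def
proof (rule Max.boundedI[OF finite_image_words_length image_words_length_nonempty])
  fix d assume "d \<in> {(SUP x\<in>cyl v. \<phi> x) - (INF x\<in>cyl v. \<phi> x) |v :: 'a list. length v = l}"
  then obtain v :: "'a list" where v: "length v = l" "d = (SUP x\<in>cyl v. \<phi> x) - (INF x\<in>cyl v. \<phi> x)"
    by blast
  have "(\<lambda>i. v ! i) \<in> cyl v" by (simp add: cyl_def)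
  hence ne: "cyl v \<noteq> {}" by blast
  have "\<phi> x - e \<le> (INF y\<in>cyl v. \<phi> y)" if "x \<in> cyl v" for x
  proof (rule cINF_greatest[OF ne])
    fix y assume "y \<in> cyl v"
    with \<open>x \<in> cyl v\<close> v(1) have "\<forall>i<l. x i = y i" by (simp add: cyl_def)
    from close[OF this] show "\<phi> x - e \<le> \<phi> y" by linarith
  qed
  hence "(SUP x\<in>cyl v. \<phi> x) \<le> (INF y\<in>cyl v. \<phi> y) + e"
    by (intro cSUP_least[OF ne]) (simp add: algebra_simps)
  thus "d \<le> e" using v(2) by simp
qed

lemma var_tendsto_zero:
  fixes \<phi> :: "(nat \<Rightarrow> 'a::finite) \<Rightarrow> real"
  assumes \<phi>: "continuous_map topX euclideanreal \<phi>"
  shows "(\<lambda>l. var l \<phi>) \<longlonglongrightarrow> 0"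
proof (rule LIMSEQ_I)
  fix r :: real assume "0 < r"
  then obtain L where L: "\<And>x y. \<forall>i<L. x i = y i \<Longrightarrow> \<bar>\<phi> x - \<phi> y\<bar> < r/2"
    using continuous_map_topX_uniformly[OF \<phi>, of "r/2"] by auto
  have "var l \<phi> \<le> r/2" if "L \<le> l" for l
    by (rule var_le) (use L that in \<open>auto intro: less_imp_le\<close>)
  moreover have "0 \<le> var l \<phi>" for l
    using var_nonneg[OF bounded_range_continuous_map_topX[OF \<phi>]] .
  ultimately have "\<forall>l\<ge>L. norm (var l \<phi> - 0) < r"
    using \<open>0 < r\<close> by force
  thus "\<exists>L. \<forall>l\<ge>L. norm (var l \<phi> - 0) < r" ..
qed

lemma proj_dist_nonneg: "0 \<le> proj_dist (\<nu> :: (nat \<Rightarrow> 'a::finite) measure) \<mu>"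
proof -
  let ?d = "\<lambda>n. Max {\<bar>ln (measure \<nu> (cyl w) / measure \<mu> (cyl w))\<bar> / real n | w :: 'a list. length w = n}"
  have "0 \<le> ?d 1"
    by (rule order_trans[OF abs_ge_zero Max_ge[OF finite_image_words_length]])
      (auto intro: exI[of _ "[undefined]"])
  also have "ereal (?d 1) \<le> proj_dist \<nu> \<mu>"
    unfolding proj_dist_def by (rule SUP_upper) simp
  finally show ?thesis by (simp add: zero_ereal_def)
qed

lemma proj_dist_le:
  fixes \<nu> \<mu> :: "(nat \<Rightarrow> 'a::finite) measure"
  assumes "\<And>w. \<bar>ln (measure \<nu> (cyl w) / measure \<mu> (cyl w))\<bar> \<le> real (length w) * c"
  shows "proj_dist \<nu> \<mu> \<le> ereal c"
  unfolding proj_dist_def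
proof (rule SUP_least)
  fix n :: nat assume "n \<in> {1..}"
  hence "0 < real n" by simp
  show "ereal (Max {\<bar>ln (measure \<nu> (cyl w) / measure \<mu> (cyl w))\<bar> / real n | w :: 'a list. length w = n}) \<le> ereal c"
    unfolding ereal_less_eq
    using assms \<open>0 < real n\<close>
    by (intro Max.boundedI[OF finite_image_words_length image_words_length_nonempty])
      (auto simp: divide_le_eq mult.commute)
qed

lemma proj_dist_markov_approx_le_var:
  fixes g :: "(nat \<Rightarrow> 'a::finite) \<Rightarrow> real"
  assumes c: "compatible_g_measure g \<mu>" and g_pos: "\<And>x. 0 < g x"
    and bdd: "bounded (range (ln \<circ> g))" and markov: "is_markov_approx \<mu> l \<nu>"
  shows "proj_dist \<nu> \<mu> \<le> ereal (var l (ln \<circ> g))"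
proof (rule proj_dist_le)
  fix w :: "'a list"
  have osc: "ln (g x) - ln (g y) \<le> var l (ln \<circ> g)"
    if "length v = l" "x \<in> cyl v" "y \<in> cyl v" for v x y
    using diff_le_var[OF bdd that] by simp
  have markov_bound: "0 < markov_cyl \<mu> l w \<and>
      \<bar>ln (markov_cyl \<mu> l w) - ln (measure \<mu> (cyl w))\<bar> \<le> real (length w - l) * var l (ln \<circ> g)"
    by (rule ln_markov_cyl_diff_le[OF c g_pos osc])
  have "measure \<nu> (cyl w) = markov_cyl \<mu> l w"
    using markov by (simp add: is_markov_approx_def)
  moreover have "0 < measure \<mu> (cyl w)"
    using c by (simp add: compatible_g_measure_def Mplus_measure_cyl_pos)
  ultimately have "\<bar>ln (measure \<nu> (cyl w) / measure \<mu> (cyl w))\<bar> \<le> real (length w - l) * var l (ln \<circ> g)"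
    using markov_bound by (simp add: ln_div)
  also have "\<dots> \<le> real (length w) * var l (ln \<circ> g)"
    by (intro mult_right_mono var_nonneg[OF bdd]) simp
  finally show "\<bar>ln (measure \<nu> (cyl w) / measure \<mu> (cyl w))\<bar> \<le> real (length w) * var l (ln \<circ> g)" .
qed

theorem theorem3p1:
  fixes g :: "(nat \<Rightarrow> 'a::finite) \<Rightarrow> real"
    and \<mu> :: "(nat \<Rightarrow> 'a) measure"
    and \<mu>l :: "nat \<Rightarrow> (nat \<Rightarrow> 'a) measure"
  assumes "g_function g"
    and "continuous_map topX euclideanreal g"
    and "compatible_g_measure g \<mu>"
    and "\<forall>l\<ge>1. is_markov_approx \<mu> l (\<mu>l l)"
  shows "(\<lambda>l. proj_dist (\<mu>l l) \<mu>) \<longlonglongrightarrow> 0 \<and>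
         (\<forall>l\<ge>1. proj_dist (\<mu>l l) \<mu> \<le> ereal (var l (ln \<circ> g)))"
proof -
  have g_pos: "\<And>x. 0 < g x" using assms(1) by (simp add: g_function_def)
  have cont: "continuous_map topX euclideanreal (ln \<circ> g)"
    using continuous_map_ln_comp[OF assms(2) g_pos] .
  have bound: "\<forall>l\<ge>1. proj_dist (\<mu>l l) \<mu> \<le> ereal (var l (ln \<circ> g))"
    using proj_dist_markov_approx_le_var[OF assms(3) g_pos bounded_range_continuous_map_topX[OF cont]]
      assms(4) by blast
  have "(\<lambda>l. proj_dist (\<mu>l l) \<mu>) \<longlonglongrightarrow> 0"
  proof (rule tendsto_sandwich)
    show "\<forall>\<^sub>F l in sequentially. 0 \<le> proj_dist (\<mu>l l) \<mu>"
      by (simp add: proj_dist_nonneg)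
    show "\<forall>\<^sub>F l in sequentially. proj_dist (\<mu>l l) \<mu> \<le> ereal (var l (ln \<circ> g))"
      using eventually_ge_at_top[of 1] by (rule eventually_mono) (use bound in blast)
    show "(\<lambda>l. ereal (var l (ln \<circ> g))) \<longlonglongrightarrow> 0"
      using var_tendsto_zero[OF cont] by (simp add: zero_ereal_def)
  qed simp
  with bound show ?thesis by blast
qed

end
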